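(* Let $\epsilon > 0$ and $N \geq 1$ be real numbers. Let $\alpha$ be a real number and suppose there are integers $a$ and $q$ with $1 \leq q \leq N^{4/3}$, $\gcd(a,q) = 1$, and $\left|\alpha - \frac{a}{q}\right| \leq \frac{1}{q N^{4/3}}$. Then there exist integers $a_1, a_2$ and integers $1 \leq q_1, q_2 \leq N$ such that $$\left|\alpha - \frac{a_1}{q_1} - \frac{a_2}{q_2}\right| \leq \frac{C_\epsilon}{q N^{4/3 - \epsilon}},$$ where $C_\epsilon>0$ is a constant depending only on $\epsilon$. *)

theory Defs
  imports Complex_Main
begin

end

theory Submission
  imports Defs "HOL-Computational_Algebra.Primes" "HOL-Real_Asymp.Real_Asymp"
    "HOL-Analysis.Kronecker_Approximation_Theorem"
begin

(* Let alpha lie within 1/(q N^(4/3)) of a/q with gcd(a,q) = 1.  Put Y ~ N^(11/12) and, for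
   each prime Y < p <= N, take a Dirichlet approximation |k (a p/q) - h| < 1/Y with 0 < k <= Y.
   If for some p the product p k Y is at least q N^(4/3), then h/(p k) is within
   1/(q N^(4/3)) of a/q, and since k < p the fraction h/(p k) splits (Bezout) into
   b/p + c/k: this gives the claim even with N^eps replaced by a constant.  Otherwise every
   n = p k is smaller than q N^(4/3)/Y and a n lies within q/Y of a multiple of q; the
   distinct n = p k are then at most about 2 N^(5/6) in number, contradicting Chebyshev's
   bound pi(N) >> N / log N.  Small N are covered by a trivial approximation. *)

section \<open>A Chebyshev lower bound for the number of primes\<close>

definition prime_count :: "nat \<Rightarrow> nat" where
  "prime_count n = card {p. prime p \<and> p \<le> n}"

lemma multiplicity_le_self:
  assumes "prime (p::nat)" "m > 0"
  shows "multiplicity p m \<le> m"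
proof -
  have "p ^ multiplicity p m \<le> m"
    using assms by (intro dvd_imp_le multiplicity_dvd) auto
  moreover have "multiplicity p m < 2 ^ multiplicity p m" by (rule less_exp)
  moreover have "2 ^ multiplicity p m \<le> p ^ multiplicity p m"
    using assms prime_ge_2_nat by (intro power_mono) auto
  ultimately show ?thesis by linarith
qed

lemma legendre_formula:
  assumes p: "prime (p::nat)"
  shows "n \<le> K \<Longrightarrow> multiplicity p (fact n :: nat) = (\<Sum>i\<in>{1..K}. n div p^i)"
proof (induction n)
  case 0
  then show ?case using p by simp
next
  case (Suc n)
  define v where "v = multiplicity p (Suc n)"
  have vK: "v \<le> K" using multiplicity_le_self[OF p, of "Suc n"] Suc.prems unfolding v_def by simp
  have "fact (Suc n) = Suc n * (fact n :: nat)" by simp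
  hence "multiplicity p (fact (Suc n) :: nat) = v + multiplicity p (fact n :: nat)"
    unfolding v_def using p
    by (simp add: prime_elem_multiplicity_mult_distrib prime_imp_prime_elem del: fact_Suc mult_Suc)
  also have "multiplicity p (fact n :: nat) = (\<Sum>i\<in>{1..K}. n div p^i)"
    using Suc by simp
  also have "v = (\<Sum>i\<in>{1..K}. if i \<le> v then 1 else 0)"
  proof -
    have "{i\<in>{1..K}. i \<le> v} = {1..v}" using vK by auto
    thus ?thesis by (simp add: sum.If_cases Int_def)
  qed
  also have "(\<Sum>i\<in>{1..K}. if i \<le> v then 1 else 0) + (\<Sum>i\<in>{1..K}. n div p^i)
      = (\<Sum>i\<in>{1..K}. Suc n div p^i)"
    unfolding sum.distrib[symmetric]
  proof (intro sum.cong refl)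
    fix i
    (* n div p^i increases by one exactly when p^i divides n + 1 *)
    have "p ^ i dvd Suc n \<longleftrightarrow> i \<le> v"
      unfolding v_def by (rule power_dvd_iff_le_multiplicity) (use p in auto)
    moreover have "p ^ i > 0" using p prime_gt_0_nat by simp
    ultimately show "(if i \<le> v then 1 else 0) + n div p ^ i = Suc n div p ^ i"
      by (auto simp: div_Suc dvd_eq_mod_eq_0)
  qed
  finally show ?case .
qed

(* Each term of Legendre's formula for (2n choose n) is 0 or 1, and 0 once d > 2n. *)
lemma double_div_le:
  fixes n d :: nat
  assumes "d > 0"
  shows "(2*n) div d \<le> 2 * (n div d) + (if d \<le> 2*n then 1 else 0)"
proof (cases "d \<le> 2*n")
  case True
  have "n = d * (n div d) + n mod d" "n mod d < d" using assms by simp_all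
  hence "n < d * (n div d) + d" by linarith
  hence "2*n < d * (2 * (n div d) + 2)" by (simp add: algebra_simps)
  hence "(2*n) div d < 2 * (n div d) + 2" using assms by (simp add: div_less_iff_less_mult mult.commute)
  then show ?thesis using True by simp
qed simp

(* The exponents i <= K with p^i <= m are at most the largest one, so p^(their number) <= m. *)
lemma power_card_exponents_le:
  fixes p m K :: nat
  assumes "p > 0" "m > 0"
  shows "p ^ card {i\<in>{1..K}. p^i \<le> m} \<le> m"
proof (cases "{i\<in>{1..K}. p^i \<le> m} = {}")
  case False
  define A where "A = {i\<in>{1..K}. p^i \<le> m}"
  define j where "j = Max A"
  have fin: "finite A" unfolding A_def by simp
  have "j \<in> A" using Max_in[OF fin] False unfolding j_def A_def by blast
  hence "p^j \<le> m" unfolding A_def by simp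
  moreover have "A \<subseteq> {1..j}" using Max_ge[OF fin] unfolding j_def A_def by auto
  hence "card A \<le> j" using card_mono[of "{1..j}" A] by simp
  hence "p ^ card A \<le> p ^ j" using assms by (intro power_increasing) auto
  ultimately show ?thesis unfolding A_def by simp
next
  case True
  then show ?thesis using assms by (simp only: True card.empty power_0)
qed

lemma prime_power_central_binomial_le:
  assumes p: "prime (p::nat)" and n: "n > 0"
  shows "p ^ multiplicity p ((2*n) choose n) \<le> 2*n"
proof -
  define A where "A = {i\<in>{1..2*n}. p^i \<le> 2*n}"
  have "fact n * fact (2*n - n) * ((2*n) choose n) = (fact (2*n) :: nat)"
    by (rule binomial_fact_lemma) simp
  hence "fact (2*n) = fact n * fact n * ((2*n) choose n)" by simp
  hence "multiplicity p (fact (2*n) :: nat) = 2 * multiplicity p (fact n :: nat)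
           + multiplicity p ((2*n) choose n)"
    using p by (simp add: prime_elem_multiplicity_mult_distrib)
  hence "multiplicity p ((2*n) choose n) + 2 * (\<Sum>i\<in>{1..2*n}. n div p^i)
           = (\<Sum>i\<in>{1..2*n}. (2*n) div p^i)"
    using legendre_formula[OF p, of n "2*n"] legendre_formula[OF p, of "2*n" "2*n"] by simp
  also have "\<dots> \<le> (\<Sum>i\<in>{1..2*n}. 2 * (n div p^i) + (if p^i \<le> 2*n then 1 else 0))"
    using p prime_gt_0_nat by (intro sum_mono double_div_le) auto
  also have "\<dots> = 2 * (\<Sum>i\<in>{1..2*n}. n div p^i) + card A"
    by (simp add: sum.distrib sum_distrib_left sum.If_cases A_def Int_def)
  finally have "multiplicity p ((2*n) choose n) \<le> card A" by simp
  hence "p ^ multiplicity p ((2*n) choose n) \<le> p ^ card A"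
    using prime_gt_0_nat[OF p] by (intro power_increasing) auto
  also have "\<dots> \<le> 2*n" unfolding A_def using p n prime_gt_0_nat by (intro power_card_exponents_le) auto
  finally show ?thesis .
qed

lemma central_binomial_le_power_prime_count:
  assumes n: "n > 0"
  shows "(2*n) choose n \<le> (2*n) ^ prime_count (2*n)"
proof -
  let ?C = "(2*n) choose n"
  have factors_small: "prime_factors ?C \<subseteq> {p. prime p \<and> p \<le> 2*n}"
  proof
    fix p assume "p \<in> prime_factors ?C"
    hence pr: "prime p" and "p dvd ?C" by (auto simp: in_prime_factors_iff)
    moreover have "?C dvd fact (2*n)"
      using binomial_fact_lemma[of n "2*n"] by (metis dvd_triv_right le_add2 mult_2)
    ultimately have "p dvd fact (2*n)" using dvd_trans by blast
    thus "p \<in> {p. prime p \<and> p \<le> 2*n}" using pr prime_dvd_fact_iff[OF pr] by auto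
  qed
  have "?C = (\<Prod>p \<in> prime_factors ?C. p ^ multiplicity p ?C)"
    by (rule prime_factorization_nat) simp
  also have "\<dots> \<le> (\<Prod>p \<in> prime_factors ?C. 2*n)"
    by (intro prod_mono) (auto intro: prime_power_central_binomial_le n)
  also have "\<dots> = (2*n) ^ card (prime_factors ?C)" by simp
  also have "\<dots> \<le> (2*n) ^ prime_count (2*n)"
    unfolding prime_count_def using n factors_small by (intro power_increasing card_mono) auto
  finally show ?thesis .
qed

(* Chebyshev's lower bound pi(N) >= (N - 2)/2 * log 4 / log N - 1, from
   4^m / (2m) <= (2m choose m) <= (2m)^pi(2m) with m = floor(N/2). *)
lemma prime_count_lower_bound:
  fixes N :: real
  assumes N: "N \<ge> 4"
  shows "(N-2)/2 * ln 4 / ln N - 1 \<le> real (prime_count (nat \<lfloor>N\<rfloor>))"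
proof -
  define m where "m = nat \<lfloor>N\<rfloor> div 2"
  have m_lower: "2 * real m \<ge> N - 2" and m_upper: "2 * real m \<le> N" and "2*m \<le> nat \<lfloor>N\<rfloor>"
    using N unfolding m_def by linarith+
  have mpos: "m > 0" using m_lower N by (cases m) auto
  define pi where "pi = prime_count (2*m)"
  have pi_le: "pi \<le> prime_count (nat \<lfloor>N\<rfloor>)"
    unfolding pi_def prime_count_def by (intro card_mono) (use \<open>2*m \<le> _\<close> in auto)
  have "4^m / (2*real m) \<le> real ((2*m) choose m)" by (rule central_binomial_lower_bound[OF mpos])
  also have "\<dots> \<le> real ((2*m) ^ pi)"
    unfolding pi_def of_nat_le_iff by (rule central_binomial_le_power_prime_count[OF mpos])
  finally have "ln (4^m / (2*real m)) \<le> ln ((2*real m) ^ pi)"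
    using mpos by (subst ln_le_cancel_iff) auto
  moreover have "ln ((2*real m) ^ pi) = real pi * ln (2*real m)"
    by (rule ln_realpow)
  moreover have "ln (4^m / (2*real m)) = real m * ln 4 - ln (2*real m)"
    using mpos by (simp add: ln_div ln_realpow)
  ultimately have "real m * ln 4 - ln (2*real m) \<le> real pi * ln (2 * real m)" by simp
  moreover have l2: "ln (2*real m) > 0" using mpos by simp
  ultimately have "real m * ln 4 / ln (2*real m) - 1 \<le> real pi"
    by (simp add: field_simps)
  moreover have "real m * ln 4 / ln N \<le> real m * ln 4 / ln (2*real m)"
    using l2 m_upper mpos by (intro divide_left_mono mult_nonneg_nonneg) auto
  moreover have "(N-2)/2 * ln 4 / ln N \<le> real m * ln 4 / ln N"
    using m_lower N by (intro divide_right_mono mult_right_mono) auto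
  ultimately show ?thesis using pi_le by linarith
qed

section \<open>Counting integers n with a n close to a multiple of q\<close>

lemma same_block_cong_imp_eq:
  fixes a q m m' :: int
  assumes q: "q > 0" and cop: "coprime a q"
    and cong: "q dvd a * m - a * m'" and block: "m div q = m' div q"
  shows "m = m'"
proof (rule ccontr)
  assume "m \<noteq> m'"
  have "q dvd a * (m - m')" using cong by (simp add: algebra_simps)
  hence "q dvd m - m'" using cop by (metis coprime_commute coprime_dvd_mult_right_iff)
  hence "\<bar>q\<bar> \<le> \<bar>m - m'\<bar>" using \<open>m \<noteq> m'\<close> by (intro dvd_imp_le_int) auto
  moreover have "m = q * (m div q) + m mod q" "m' = q * (m' div q) + m' mod q"
    "0 \<le> m mod q" "m mod q < q" "0 \<le> m' mod q" "m' mod q < q"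
    using q by auto
  ultimately show False using block q by (smt (verit))
qed

(* Among 1, ..., X, each block of q consecutive integers contains at most one n for each
   residue t of a n modulo q, so few n have a n within R of a multiple of q. *)
lemma card_small_residues:
  fixes q a :: int and X :: nat and R :: real and S :: "nat set"
  assumes q: "q > 0" and cop: "coprime a q" and S: "S \<subseteq> {1..X}"
    and small: "\<And>n. n \<in> S \<Longrightarrow> \<exists>h::int. \<bar>of_int (a * int n - h*q)\<bar> < R"
  shows "card S \<le> nat (int X div q + 1) * nat (2 * \<lfloor>R\<rfloor> + 1)"
proof -
  have "\<exists>t::int. \<bar>of_int t\<bar> < R \<and> q dvd (a * int n - t)" if "n \<in> S" for n
  proof -
    obtain h where "\<bar>of_int (a * int n - h*q)\<bar> < R" using small \<open>n \<in> S\<close> by auto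
    thus ?thesis by (intro exI[of _ "a * int n - h*q"]) auto
  qed
  then obtain t where t: "\<And>n. n \<in> S \<Longrightarrow> \<bar>of_int (t n)\<bar> < R \<and> q dvd (a * int n - t n)"
    by metis
  define f where "f n = (int n div q, t n)" for n
  have "inj_on f S"
  proof
    fix n n' assume nS: "n \<in> S" and n'S: "n' \<in> S" and "f n = f n'"
    hence block: "int n div q = int n' div q" and "t n = t n'" unfolding f_def by auto
    have "q dvd (a * int n - t n) - (a * int n' - t n')" using t[OF nS] t[OF n'S] by auto
    hence "q dvd a * int n - a * int n'" using \<open>t n = t n'\<close> by simp
    thus "n = n'" using same_block_cong_imp_eq[OF q cop _ block] by simp
  qed
  moreover have "f ` S \<subseteq> {0..int X div q} \<times> {-\<lfloor>R\<rfloor>..\<lfloor>R\<rfloor>}"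
  proof
    fix x assume "x \<in> f ` S"
    then obtain n where nS: "n \<in> S" and x: "x = f n" by auto
    have "int n div q \<le> int X div q" using S nS q by (intro zdiv_mono1) auto
    moreover have "\<bar>t n\<bar> \<le> \<lfloor>R\<rfloor>" using t[OF nS] by (simp add: le_floor_iff)
    ultimately show "x \<in> {0..int X div q} \<times> {-\<lfloor>R\<rfloor>..\<lfloor>R\<rfloor>}"
      unfolding x f_def using q by (auto simp: pos_imp_zdiv_nonneg_iff)
  qed
  ultimately have "card S \<le> card ({0..int X div q} \<times> {-\<lfloor>R\<rfloor>..\<lfloor>R\<rfloor>})"
    by (metis card_image card_mono finite_SigmaI finite_atLeastAtMost_int)
  thus ?thesis by (simp add: card_cartesian_product)
qed

lemma card_small_residues_real:
  fixes q a :: int and X :: nat and R :: real and S :: "nat set"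
  assumes q: "q > 0" and R: "R \<ge> 0" and cop: "coprime a q" and S: "S \<subseteq> {1..X}"
    and small: "\<And>n. n \<in> S \<Longrightarrow> \<exists>h::int. \<bar>of_int (a * int n - h*q)\<bar> < R"
  shows "real (card S) \<le> (real X / of_int q + 1) * (2*R + 1)"
proof -
  have "real (nat (int X div q + 1)) = of_int \<lfloor>real X / of_int q\<rfloor> + 1"
    using q floor_divide_of_int_eq[of "int X" q, where 'a=real]
    by (simp add: pos_imp_zdiv_nonneg_iff)
  also have "\<dots> \<le> real X / of_int q + 1" by simp
  finally have blocks: "real (nat (int X div q + 1)) \<le> real X / of_int q + 1" .
  have residues: "real (nat (2 * \<lfloor>R\<rfloor> + 1)) \<le> 2*R + 1" using R by simp
  have "real (card S) \<le> real (nat (int X div q + 1)) * real (nat (2 * \<lfloor>R\<rfloor> + 1))"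
    using card_small_residues[OF q cop S small] by (metis of_nat_le_iff of_nat_mult)
  also have "\<dots> \<le> (real X / of_int q + 1) * (2*R + 1)"
    using q by (intro mult_mono blocks residues) auto
  finally show ?thesis .
qed

lemma inj_on_prime_times_smaller:
  fixes P :: "nat set" and k :: "nat \<Rightarrow> nat" and Y :: nat
  assumes P: "\<And>p. p \<in> P \<Longrightarrow> prime p \<and> Y < p" and k: "\<And>p. p \<in> P \<Longrightarrow> 0 < k p \<and> k p \<le> Y"
  shows "inj_on (\<lambda>p. p * k p) P"
proof
  fix p p' assume pP: "p \<in> P" and p'P: "p' \<in> P" and eq: "p * k p = p' * k p'"
  have "p dvd p' * k p'" using eq by (metis dvd_triv_left)
  moreover have "\<not> p dvd k p'" using k[OF p'P] P[OF pP] by (auto dest!: dvd_imp_le)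
  ultimately have "p dvd p'" using P[OF pP] prime_dvd_mult_iff by blast
  thus "p = p'" using P[OF pP] P[OF p'P] by (simp add: primes_dvd_imp_eq)
qed

lemma dirichlet_product_near_multiple:
  fixes a q k h :: int and p :: nat and Y :: real
  assumes q: "q > 0" and approx: "\<bar>of_int k * (of_int a * real p / of_int q) - of_int h\<bar> < 1 / Y"
  shows "\<bar>of_int (a * (int p * k) - h * q)\<bar> < of_int q / Y"
proof -
  have "of_int (a * (int p * k) - h * q) = of_int q * (of_int k * (of_int a * real p / of_int q) - of_int h)"
    using q by (simp add: field_simps)
  hence "\<bar>of_int (a * (int p * k) - h * q)\<bar>
      = of_int q * \<bar>of_int k * (of_int a * real p / of_int q) - of_int h\<bar>"
    using q by (simp add: abs_mult)
  also have "\<dots> < of_int q * (1 / Y)" using approx q by (intro mult_strict_left_mono) auto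
  finally show ?thesis by simp
qed

(* If every prime p in P (all p > Y) has a Dirichlet approximation k (a p/q) ~ h with
   0 < k <= Y whose product p k Y stays below q M, then the numbers n = p k are distinct,
   at most q M / Y, and a n lies within q / Y of a multiple of q; hence P is small. *)
lemma few_primes_with_small_products:
  fixes a q :: int and Y :: nat and M :: real and P :: "nat set"
  assumes q: "q > 0" and cop: "coprime a q" and Y: "Y > 0" and M: "M \<ge> 0"
    and P: "\<And>p. p \<in> P \<Longrightarrow> prime p \<and> Y < p"
    and approx: "\<And>p. p \<in> P \<Longrightarrow> \<exists>k h::int. 0 < k \<and> k \<le> int Y \<and>
                   \<bar>of_int k * (of_int a * real p / of_int q) - of_int h\<bar> < 1 / real Y \<and>
                   real p * of_int k * real Y < of_int q * M"
  shows "real (card P) \<le> (M / real Y + 1) * (2 * of_int q / real Y + 1)"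
proof -
  obtain kf hf :: "nat \<Rightarrow> int" where kh: "\<And>p. p \<in> P \<Longrightarrow> 0 < kf p \<and> kf p \<le> int Y \<and>
      \<bar>of_int (kf p) * (of_int a * real p / of_int q) - of_int (hf p)\<bar> < 1 / real Y \<and>
      real p * of_int (kf p) * real Y < of_int q * M"
    using approx by metis
  define X where "X = nat \<lfloor>of_int q * M / real Y\<rfloor>"
  define R where "R = of_int q / real Y"
  define S where "S = {n\<in>{1..X}. \<exists>h::int. \<bar>of_int (a * int n - h*q)\<bar> < R}"
  define g where "g p = p * nat (kf p)" for p
  have "inj_on g P"
    unfolding g_def using P kh by (intro inj_on_prime_times_smaller) (auto simp: nat_le_iff)
  moreover have "g ` P \<subseteq> S"
  proof
    fix n assume "n \<in> g ` P"
    then obtain p where pP: "p \<in> P" and n: "n = g p" by auto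
    have n_real: "real n = real p * of_int (kf p)" unfolding n g_def using kh[OF pP] by simp
    have "nat (kf p) \<ge> 1" "p \<ge> 1" using kh[OF pP] P[OF pP] prime_gt_0_nat by auto
    hence "n \<ge> 1" unfolding n g_def by (simp add: one_le_mult_iff)
    moreover have "real n < of_int q * M / real Y"
      using kh[OF pP] Y n_real by (simp add: field_simps)
    hence "n \<le> X" unfolding X_def by linarith
    moreover have "int n = int p * kf p" unfolding n g_def using kh[OF pP] by simp
    hence "\<bar>of_int (a * int n - hf p * q)\<bar> < R"
      unfolding R_def using dirichlet_product_near_multiple[OF q] kh[OF pP] by simp
    ultimately show "n \<in> S" unfolding S_def by auto
  qed
  ultimately have "card P \<le> card S"
    using card_mono[of S "g ` P"] card_image[of g P] by (simp add: S_def)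
  hence "real (card P) \<le> real (card S)" by simp
  also have "\<dots> \<le> (real X / of_int q + 1) * (2*R + 1)"
    using q Y by (intro card_small_residues_real[OF q _ cop]) (auto simp: S_def R_def)
  also have "\<dots> \<le> (M / real Y + 1) * (2 * of_int q / real Y + 1)"
  proof (intro mult_mono)
    have "0 \<le> of_int q * M / real Y" using q M by simp
    hence "real X \<le> of_int q * M / real Y" unfolding X_def by linarith
    thus "real X / of_int q + 1 \<le> M / real Y + 1" using q by (simp add: field_simps)
  qed (use q Y M in \<open>auto simp: R_def\<close>)
  finally show ?thesis .
qed

section \<open>Splitting a fraction with coprime factors in the denominator\<close>

(* By Bezout, u p + v k = 1 gives h/(p k) = h v/p + h u/k. *)
lemma split_fraction:
  fixes p k h :: int
  assumes "coprime p k" "p \<noteq> 0" "k \<noteq> 0"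
  obtains b c where
    "of_int h / (of_int p * of_int k) = (of_int b / of_int p + of_int c / of_int k :: real)"
proof -
  obtain u v where "u * p + v * k = 1"
    using bezout_int[of p k] assms(1) by auto
  hence "real_of_int u * of_int p + of_int v * of_int k = 1" by (metis of_int_1 of_int_add of_int_mult)
  hence "of_int h / (of_int p * of_int k)
      = of_int (h * v) / of_int p + (of_int (h * u) / of_int k :: real)"
    using assms by (simp add: field_simps) (metis distrib_left mult.commute mult.right_neutral)
  thus thesis by (rule that)
qed

section \<open>Approximation by two fractions\<close>

definition two_fraction_approx :: "real \<Rightarrow> real \<Rightarrow> real \<Rightarrow> bool" where
  "two_fraction_approx N \<alpha> \<delta> \<longleftrightarrow> (\<exists>(a1::int) (a2::int) (q1::int) (q2::int).
     1 \<le> q1 \<and> real_of_int q1 \<le> N \<and> 1 \<le> q2 \<and> real_of_int q2 \<le> N \<and>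
     \<bar>\<alpha> - real_of_int a1 / real_of_int q1 - real_of_int a2 / real_of_int q2\<bar> \<le> \<delta>)"

lemma two_fraction_approx_mono:
  "two_fraction_approx N \<alpha> \<delta> \<Longrightarrow> \<delta> \<le> \<delta>' \<Longrightarrow> two_fraction_approx N \<alpha> \<delta>'"
  unfolding two_fraction_approx_def by (meson order_trans)

(* Rounding alpha to the nearest integer already gives error 1/2. *)
lemma two_fraction_approx_trivial:
  assumes "N \<ge> 1"
  shows "two_fraction_approx N \<alpha> (1/2)"
proof -
  have "\<bar>\<alpha> - real_of_int \<lfloor>\<alpha> + 1/2\<rfloor>\<bar> \<le> 1/2" by linarith
  hence "\<bar>\<alpha> - real_of_int \<lfloor>\<alpha> + 1/2\<rfloor> / 1 - real_of_int 0 / 1\<bar> \<le> 1/2" by simp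
  thus ?thesis using assms unfolding two_fraction_approx_def
    by (intro exI[of _ "\<lfloor>\<alpha> + 1/2\<rfloor>"] exI[of _ 0] exI[of _ 1]) auto
qed

(* A Dirichlet approximation for a p/q with p k Y >= q M gives a fraction h/(p k) within
   1/(q M) of a/q; as k < p, it splits into two fractions with denominators p and k. *)
lemma two_fraction_approx_from_good_prime:
  fixes a q h k :: int and p Y :: nat and N M \<alpha> :: real
  assumes p: "prime p" "Y < p" "real p \<le> N" and k: "0 < k" "k \<le> int Y"
    and dirichlet: "\<bar>of_int k * (of_int a * real p / of_int q) - of_int h\<bar> < 1 / real Y"
    and large: "of_int q * M \<le> real p * of_int k * real Y"
    and q: "q > 0" and M: "M > 0"
    and alpha: "\<bar>\<alpha> - of_int a / of_int q\<bar> \<le> 1 / (of_int q * M)"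
  shows "two_fraction_approx N \<alpha> (2 / (of_int q * M))"
proof -
  have ppos: "real p > 0" and kpos: "real_of_int k > 0" using p k prime_gt_0_nat by auto
  have "\<not> int p dvd k" using k p by (auto dest: zdvd_imp_le)
  hence "coprime (int p) k" using p by (simp add: prime_imp_coprime)
  then obtain b c where split: "of_int h / (real p * of_int k) = of_int b / real p + of_int c / of_int k"
    using split_fraction[of "int p" k h] k p by (auto simp: prime_gt_0_nat)
  have "of_int a / of_int q - of_int h / (real p * of_int k)
        = (of_int k * (of_int a * real p / of_int q) - of_int h) / (real p * of_int k)"
    using ppos kpos q by (simp add: field_simps)
  hence "\<bar>of_int a / of_int q - of_int h / (real p * of_int k)\<bar>
        = \<bar>of_int k * (of_int a * real p / of_int q) - of_int h\<bar> / (real p * of_int k)"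
    using ppos kpos by simp
  also have "\<dots> \<le> 1 / (real p * of_int k * real Y)"
    using dirichlet ppos kpos by (simp add: field_simps)
  also have "\<dots> \<le> 1 / (of_int q * M)"
  proof -
    have qM: "0 < of_int q * M" using q M by simp
    hence "0 < real p * of_int k * real Y" using large by linarith
    thus ?thesis using divide_left_mono[OF large, of 1] mult_pos_pos[OF _ qM] by simp
  qed
  finally have "\<bar>\<alpha> - of_int b / real p - of_int c / of_int k\<bar> \<le> 2 / (of_int q * M)"
    using alpha split by linarith
  moreover have "real_of_int k \<le> N" using k p by linarith
  ultimately show ?thesis unfolding two_fraction_approx_def using k p prime_gt_0_nat
    by (intro exI[of _ b] exI[of _ c] exI[of _ "int p"] exI[of _ k]) auto
qed

(* The Chebyshev lower bound minus about N^(11/12) eventually exceeds the count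
   (N^(5/12) + 1)(2 N^(5/12) + 1) of few_primes_with_small_products. *)
lemma chebyshev_beats_residue_count:
  "eventually (\<lambda>N::real. (N powr (5/12) + 1) * (2 * N powr (5/12) + 1)
      < (N-2)/2 * ln 4 / ln N - 1 - (N powr (11/12) + 2)) at_top"
  by real_asymp

lemma two_fraction_approx_large_N:
  fixes N \<alpha> :: real and a q :: int
  assumes N: "N \<ge> 4"
    and many_primes: "(N powr (5/12) + 1) * (2 * N powr (5/12) + 1)
                        < (N-2)/2 * ln 4 / ln N - 1 - (N powr (11/12) + 2)"
    and q: "1 \<le> q" "of_int q \<le> N powr (4/3)" and cop: "coprime a q"
    and alpha: "\<bar>\<alpha> - of_int a / of_int q\<bar> \<le> 1 / (of_int q * N powr (4/3))"
  shows "two_fraction_approx N \<alpha> (2 / (of_int q * N powr (4/3)))"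
proof -
  define Y where "Y = nat \<lceil>N powr (11/12)\<rceil>"
  have "real Y = of_int \<lceil>N powr (11/12)\<rceil>"
    unfolding Y_def by (simp add: ceiling_le_zero less_le_not_le)
  hence Y_lower: "N powr (11/12) \<le> real Y" and Y_upper: "real Y \<le> N powr (11/12) + 1"
    by linarith+
  moreover have "0 < N powr (11/12)" using N by simp
  ultimately have Ypos: "Y > 0" using of_nat_0_less_iff by fastforce
  have N_over_Y: "N powr (4/3) / real Y \<le> N powr (5/12)"
  proof -
    have "N powr (4/3) / real Y \<le> N powr (4/3) / N powr (11/12)"
      using Y_lower N Ypos by (intro divide_left_mono) auto
    also have "\<dots> = N powr (5/12)" by (simp flip: powr_diff)
    finally show ?thesis .
  qed
  define P where "P = {p. prime p \<and> Y < p \<and> p \<le> nat \<lfloor>N\<rfloor>}"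
  have "\<exists>p\<in>P. \<exists>k h. 0 < k \<and> k \<le> int Y \<and>
          \<bar>of_int k * (of_int a * real p / of_int q) - of_int h\<bar> < 1 / real Y \<and>
          of_int q * N powr (4/3) \<le> real p * of_int k * real Y"
  proof (rule ccontr)
    assume none: "\<not> ?thesis"
    have "real (card P) \<le> (N powr (4/3) / real Y + 1) * (2 * of_int q / real Y + 1)"
    proof (rule few_primes_with_small_products[OF _ cop Ypos])
      fix p assume "p \<in> P"
      obtain h k where "0 < k" "k \<le> int Y"
        "\<bar>of_int k * (of_int a * real p / of_int q) - of_int h\<bar> < 1 / real Y"
        using Dirichlet_approx[OF Ypos] by blast
      thus "\<exists>k h. 0 < k \<and> k \<le> int Y \<and>
              \<bar>of_int k * (of_int a * real p / of_int q) - of_int h\<bar> < 1 / real Y \<and>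
              real p * of_int k * real Y < of_int q * N powr (4/3)"
        using none \<open>p \<in> P\<close> by (meson not_le)
    qed (use q in \<open>auto simp: P_def\<close>)
    also have "\<dots> \<le> (N powr (5/12) + 1) * (2 * N powr (5/12) + 1)"
    proof (intro mult_mono)
      have "of_int q / real Y \<le> N powr (4/3) / real Y" using q by (intro divide_right_mono) auto
      thus "2 * of_int q / real Y + 1 \<le> 2 * N powr (5/12) + 1" using N_over_Y by simp
    qed (use N_over_Y q in auto)
    finally have P_small: "real (card P) \<le> (N powr (5/12) + 1) * (2 * N powr (5/12) + 1)" .
    have "{p. prime p \<and> p \<le> nat \<lfloor>N\<rfloor>} \<subseteq> P \<union> {..Y}" unfolding P_def by auto
    moreover have "finite P" unfolding P_def by simp
    ultimately have "prime_count (nat \<lfloor>N\<rfloor>) \<le> card P + card {..Y}"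
      unfolding prime_count_def by (meson card_Un_le card_mono finite_Un finite_atMost le_trans)
    thus False using prime_count_lower_bound[OF N] P_small Y_upper many_primes by simp
  qed
  then obtain p k h where "p \<in> P" "0 < k" "k \<le> int Y"
    "\<bar>of_int k * (of_int a * real p / of_int q) - of_int h\<bar> < 1 / real Y"
    "of_int q * N powr (4/3) \<le> real p * of_int k * real Y"
    by blast
  moreover from \<open>p \<in> P\<close> have "prime p" "Y < p" and "p \<le> nat \<lfloor>N\<rfloor>" unfolding P_def by auto
  moreover from this(3) have "real p \<le> N" using N by linarith
  ultimately show ?thesis
    using q N alpha by (intro two_fraction_approx_from_good_prime) auto
qed

(* For bounded N the target error C/(q N^(4/3 - eps)) is bounded below, so the trivial
   approximation suffices. *)
lemma denominator_le_cube:
  fixes N B \<epsilon> :: real and q :: int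
  assumes N: "1 \<le> N" "N \<le> B" and \<epsilon>: "\<epsilon> > 0" and q: "1 \<le> q" "of_int q \<le> N powr (4/3)"
  shows "of_int q * N powr (4/3 - \<epsilon>) \<le> B powr 3"
proof -
  have "of_int q * N powr (4/3 - \<epsilon>) \<le> N powr (4/3) * N powr (4/3)"
    using N \<epsilon> q by (intro mult_mono powr_mono) auto
  also have "\<dots> = N powr (8/3)" by (simp flip: powr_add)
  also have "\<dots> \<le> N powr 3" using N by (intro powr_mono) auto
  also have "\<dots> \<le> B powr 3" using N by (intro powr_mono2) auto
  finally show ?thesis .
qed

(* For each eps > 0 one constant C works for all N >= 1: the large-N bound for N >= N1 and
   the trivial bound for 1 <= N < N1. *)
lemma two_fraction_approx_uniform:
  fixes \<epsilon> :: real
  assumes \<epsilon>: "\<epsilon> > 0"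
  obtains C where "C > 0" and
    "\<And>N \<alpha> a q. N \<ge> 1 \<Longrightarrow> 1 \<le> q \<Longrightarrow> of_int q \<le> N powr (4/3) \<Longrightarrow> coprime a q \<Longrightarrow>
       \<bar>\<alpha> - of_int a / of_int q\<bar> \<le> 1 / (of_int q * N powr (4/3)) \<Longrightarrow>
       two_fraction_approx N \<alpha> (C / (of_int q * N powr (4/3 - \<epsilon>)))"
proof -
  obtain N0 :: real where N0: "\<And>N. N \<ge> N0 \<Longrightarrow> (N powr (5/12) + 1) * (2 * N powr (5/12) + 1)
      < (N-2)/2 * ln 4 / ln N - 1 - (N powr (11/12) + 2)"
    using chebyshev_beats_residue_count unfolding eventually_at_top_linorder by blast
  define N1 where "N1 = max N0 4"
  define C where "C = max 2 (N1 powr 3)"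
  have "two_fraction_approx N \<alpha> (C / (of_int q * N powr (4/3 - \<epsilon>)))"
    if N: "N \<ge> 1" and q: "1 \<le> q" "of_int q \<le> N powr (4/3)" and cop: "coprime a q"
      and alpha: "\<bar>\<alpha> - of_int a / of_int q\<bar> \<le> 1 / (of_int q * N powr (4/3))" for N \<alpha> a q
  proof (cases "N < N1")
    case True
    have "of_int q * N powr (4/3 - \<epsilon>) \<le> C"
      using denominator_le_cube[OF N(1) _ \<epsilon> q, of N1] True unfolding C_def by simp
    moreover have "0 < of_int q * N powr (4/3 - \<epsilon>)" using N q by simp
    ultimately have "1/2 \<le> C / (of_int q * N powr (4/3 - \<epsilon>))" by (simp add: le_divide_eq)
    thus ?thesis using two_fraction_approx_trivial[OF N] two_fraction_approx_mono by blast
  next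
    case False
    have "2 / (of_int q * N powr (4/3)) \<le> C / (of_int q * N powr (4/3 - \<epsilon>))"
      using N q \<epsilon> by (intro frac_le mult_left_mono powr_mono) (auto simp: C_def)
    moreover have "N \<ge> 4" "N \<ge> N0" using False unfolding N1_def by auto
    ultimately show ?thesis
      using two_fraction_approx_large_N[OF _ N0 q cop alpha] two_fraction_approx_mono by blast
  qed
  moreover have "C > 0" unfolding C_def by simp
  ultimately show thesis using that by blast
qed

theorem corollary1:
  fixes \<epsilon> :: real
  assumes "\<epsilon> > 0"
  shows "\<exists>C>0. \<forall>(N::real) (\<alpha>::real) (a::int) (q::int).
           N \<ge> 1 \<and> 1 \<le> q \<and> real_of_int q \<le> N powr (4/3) \<and> gcd a q = 1 \<and>
           \<bar>\<alpha> - real_of_int a / real_of_int q\<bar> \<le> 1 / (real_of_int q * N powr (4/3))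
           \<longrightarrow> (\<exists>(a1::int) (a2::int) (q1::int) (q2::int).
                 1 \<le> q1 \<and> real_of_int q1 \<le> N \<and> 1 \<le> q2 \<and> real_of_int q2 \<le> N \<and>
                 \<bar>\<alpha> - real_of_int a1 / real_of_int q1 - real_of_int a2 / real_of_int q2\<bar>
                   \<le> C / (real_of_int q * N powr (4/3 - \<epsilon>)))"
proof -
  obtain C where "C > 0" and approx: "\<And>N \<alpha> a q. N \<ge> 1 \<Longrightarrow> 1 \<le> q \<Longrightarrow>
      of_int q \<le> N powr (4/3) \<Longrightarrow> coprime a q \<Longrightarrow>
      \<bar>\<alpha> - of_int a / of_int q\<bar> \<le> 1 / (of_int q * N powr (4/3)) \<Longrightarrow>
      two_fraction_approx N \<alpha> (C / (of_int q * N powr (4/3 - \<epsilon>)))"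
    using two_fraction_approx_uniform[OF assms] by blast
  show ?thesis unfolding two_fraction_approx_def[symmetric]
  proof (intro exI[of _ C] conjI allI impI)
    fix N \<alpha> :: real and a q :: int
    assume "N \<ge> 1 \<and> 1 \<le> q \<and> real_of_int q \<le> N powr (4/3) \<and> gcd a q = 1 \<and>
      \<bar>\<alpha> - real_of_int a / real_of_int q\<bar> \<le> 1 / (real_of_int q * N powr (4/3))"
    thus "two_fraction_approx N \<alpha> (C / (real_of_int q * N powr (4/3 - \<epsilon>)))"
      by (intro approx) (auto simp: coprime_iff_gcd_eq_1)
  qed fact
qed

end
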